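(* Let $\Omega\subset\mathbb{R}^n$ be a bounded domain, let $B_r=B_r(x_0)\Subset\Omega$ with $|B_r|\le1$, let $\gamma\in(0,1)$, $K\ge1$ and $t_K:=K|B_r|^{\frac{\gamma-1}{n}}$. Let $\phi:\Omega\times[0,\infty)\to[0,\infty)$ be convex in $t$ with $\phi(x,t)=\int_0^t\phi'(x,s)\,ds$, where $\phi'$ satisfies (A0), (Inc)$_{p-1}$ and (Dec)$_{q_1-1}$ with constant $L$ and $1<p\le q_1$. Define $\bar\phi(t):=\int_0^t\bar\phi'(s)\,ds$ with \[ \bar\phi'(t):=\begin{cases}\phi'(x_0,t)&\text{if }0\le t\le t_K,\\ \frac{\phi'(x_0,t_K)}{t_K^{p-1}}t^{p-1}&\text{if }t_K\le t.\end{cases} \] Suppose that $\phi^+_{B_r}(t)\le L_K\phi^-_{B_r}(t)$ for some $L_K\ge0$ and all $t\in[1,t_K]$. Then: \begin{enumerate} \item $\bar\phi\in C^1([0,\infty))$ and $\bar\phi'$ satisfies (Inc)$_{p-1}$ and (Dec)$_{q_1-1}$; \item $\bar\phi(t)=\phi(x_0,t)$ for all $t\le t_K$; \item $\bar\phi(t)\le\frac{q_1}{p}L_K\phi(x,t)+L$ for all $(x,t)\in B_r\times[0,\infty)$, and $W^{1,\phi}(B_r)\subset W^{1,\bar\phi}(B_r)$. \end{enumerate}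
   Context: For $g:(0,\infty)\to[0,\infty)$ and $\gamma\in\mathbb{R}$: (Inc)$_\gamma$ (resp. (Dec)$_\gamma$) means $t\mapsto g(t)/t^\gamma$ is increasing (resp. decreasing) on $(0,\infty)$; (A0) with constant $L\ge1$ means $L^{-1}\le g(1)\le L$; conditions on $\phi'(x,\cdot)$ are required for every $x\in\Omega$. $\phi^+_{B_r}(t)=\sup_{x\in B_r}\phi(x,t)$, $\phi^-_{B_r}(t)=\inf_{x\in B_r}\phi(x,t)$. $W^{1,\phi}(B_r)$ is the set of $f\in W^{1,1}(B_r)$ with $f,|Df|$ in the generalized Orlicz space $L^\phi(B_r)$, whose norm is $\inf\{\lambda>0:\int_{B_r}\phi(x,|f|/\lambda)\,dx\le1\}$; $W^{1,\bar\phi}(B_r)$ is defined analogously. *)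

theory Defs
  imports "HOL-Analysis.Analysis"
begin

definition Inc :: "real \<Rightarrow> (real \<Rightarrow> real) \<Rightarrow> bool" where
  "Inc \<gamma> g \<longleftrightarrow> (\<forall>s t. 0 < s \<longrightarrow> s \<le> t \<longrightarrow> g s / s powr \<gamma> \<le> g t / t powr \<gamma>)"

definition Dec :: "real \<Rightarrow> (real \<Rightarrow> real) \<Rightarrow> bool" where
  "Dec \<gamma> g \<longleftrightarrow> (\<forall>s t. 0 < s \<longrightarrow> s \<le> t \<longrightarrow> g t / t powr \<gamma> \<le> g s / s powr \<gamma>)"

definition A0 :: "real \<Rightarrow> (real \<Rightarrow> real) \<Rightarrow> bool" where
  "A0 L g \<longleftrightarrow> inverse L \<le> g 1 \<and> g 1 \<le> L"

definition phi_plus :: "('a \<Rightarrow> real \<Rightarrow> real) \<Rightarrow> 'a set \<Rightarrow> real \<Rightarrow> real" where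
  "phi_plus \<phi> B t = (SUP x\<in>B. \<phi> x t)"

definition phi_minus :: "('a \<Rightarrow> real \<Rightarrow> real) \<Rightarrow> 'a set \<Rightarrow> real \<Rightarrow> real" where
  "phi_minus \<phi> B t = (INF x\<in>B. \<phi> x t)"

fun Ck :: "nat \<Rightarrow> 'a::euclidean_space set \<Rightarrow> ('a \<Rightarrow> real) set" where
  "Ck 0 S = {f. continuous_on S f}"
| "Ck (Suc k) S = {f. f differentiable_on S \<and>
      (\<forall>v. (\<lambda>x. frechet_derivative f (at x) v) \<in> Ck k S)}"

definition test_functions :: "'a::euclidean_space set \<Rightarrow> ('a \<Rightarrow> real) set" where
  "test_functions B = {\<psi>. (\<forall>k. \<psi> \<in> Ck k UNIV) \<and>
      compact (closure {x. \<psi> x \<noteq> 0}) \<and> closure {x. \<psi> x \<noteq> 0} \<subseteq> B}"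

definition weak_gradient :: "('a::euclidean_space \<Rightarrow> real) \<Rightarrow> ('a \<Rightarrow> 'a) \<Rightarrow> 'a set \<Rightarrow> bool" where
  "weak_gradient f G B \<longleftrightarrow>
     integrable (lebesgue_on B) f \<and> integrable (lebesgue_on B) G \<and>
     (\<forall>\<psi>\<in>test_functions B. \<forall>i\<in>Basis.
        (LINT x|lebesgue_on B. f x * frechet_derivative \<psi> (at x) i)
          = - (LINT x|lebesgue_on B. (G x \<bullet> i) * \<psi> x))"

text \<open>Generalized Orlicz space L^Phi(B): measurable f with finite Luxemburg norm.\<close>
definition orlicz :: "('a::euclidean_space \<Rightarrow> real \<Rightarrow> real) \<Rightarrow> 'a set \<Rightarrow> ('a \<Rightarrow> real) set" where
  "orlicz \<Phi> B = {f. f \<in> borel_measurable (lebesgue_on B) \<and>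
      (\<exists>c>0. (\<integral>\<^sup>+ x. ennreal (\<Phi> x (\<bar>f x\<bar> / c)) \<partial>(lebesgue_on B)) \<le> 1)}"

definition sobolev_orlicz :: "('a::euclidean_space \<Rightarrow> real \<Rightarrow> real) \<Rightarrow> 'a set \<Rightarrow> ('a \<Rightarrow> real) set" where
  "sobolev_orlicz \<Phi> B = {f. \<exists>G. weak_gradient f G B \<and> f \<in> orlicz \<Phi> B \<and>
       (\<lambda>x. norm (G x)) \<in> orlicz \<Phi> B}"

end

theory Submission
  imports Defs
begin

(* For t > 0 the truncated derivative is min (phi'(x0,t)) (c t^(p-1)) with
   c = phi'(x0,tK) / tK^(p-1), because phi'(x0,t) / t^(p-1) is increasing.  A minimum of two
   functions with (Inc)_(p-1) and (Dec)_(q1-1) has both properties, and such a function is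
   continuous on (0,oo) and tends to 0 at 0, which gives the C^1 claim.  Integrating (Inc) and
   (Dec) shows that G(t) = int_0^t g satisfies t g(t) / q1 <= G(t) <= t g(t) / p and that
   G(t) / t^p is increasing.  Hence, for t > tK,
     phibar(t) <= t phibar'(t) / p = (t/tK)^p tK phi'(x0,tK) / p <= (q1/p) (t/tK)^p phi(x0,tK)
               <= (q1/p) LK (t/tK)^p phi(x,tK) <= (q1/p) LK phi(x,t),
   while for 1 <= t <= tK the hypothesis phi+ <= LK phi- applies directly and for t <= 1
   phibar(t) <= phi'(x0,1) <= L.  On a ball of measure at most 1 this pointwise bound turns a
   bound on the phi-modular into one on the phibar-modular, and rescaling by a constant l >= 1
   uses phibar(u/l) <= phibar(u)/l, i.e. (Inc)_1 of phibar. *)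

lemma one_le_mult_powr:
  fixes K \<mu> e :: real
  assumes "1 \<le> K" "0 < \<mu>" "\<mu> \<le> 1" "e \<le> 0"
  shows "1 \<le> K * \<mu> powr e"
proof -
  have "1 powr e \<le> \<mu> powr e"
    using assms by (intro powr_mono2') auto
  then show ?thesis
    using assms mult_mono[of 1 K 1 "\<mu> powr e"] by simp
qed

lemma Inc_bounds:
  assumes "Inc \<gamma> g" "0 < s" "s \<le> t"
  shows "g s \<le> g t / t powr \<gamma> * s powr \<gamma>" and "g s / s powr \<gamma> * t powr \<gamma> \<le> g t"
proof -
  have "g s / s powr \<gamma> \<le> g t / t powr \<gamma>"
    using assms unfolding Inc_def by blast
  then show "g s \<le> g t / t powr \<gamma> * s powr \<gamma>" and "g s / s powr \<gamma> * t powr \<gamma> \<le> g t"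
    using assms by (simp_all add: divide_le_eq le_divide_eq mult.commute)
qed

lemma Dec_bounds:
  assumes "Dec \<gamma> g" "0 < s" "s \<le> t"
  shows "g t / t powr \<gamma> * s powr \<gamma> \<le> g s" and "g t \<le> g s / s powr \<gamma> * t powr \<gamma>"
proof -
  have "g t / t powr \<gamma> \<le> g s / s powr \<gamma>"
    using assms unfolding Dec_def by blast
  then show "g t / t powr \<gamma> * s powr \<gamma> \<le> g s" and "g t \<le> g s / s powr \<gamma> * t powr \<gamma>"
    using assms by (simp_all add: divide_le_eq le_divide_eq mult.commute)
qed

lemma Inc_cong: "(\<And>t. 0 < t \<Longrightarrow> f t = g t) \<Longrightarrow> Inc \<gamma> f \<longleftrightarrow> Inc \<gamma> g"
  unfolding Inc_def by auto

lemma Dec_cong: "(\<And>t. 0 < t \<Longrightarrow> f t = g t) \<Longrightarrow> Dec \<gamma> f \<longleftrightarrow> Dec \<gamma> g"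
  unfolding Dec_def by auto

lemma Inc_min:
  assumes "Inc \<gamma> f" "Inc \<gamma> g"
  shows "Inc \<gamma> (\<lambda>t. min (f t) (g t))"
  unfolding Inc_def
proof (intro allI impI)
  fix s t :: real assume st: "0 < s" "s \<le> t"
  have "min (f s / s powr \<gamma>) (g s / s powr \<gamma>) \<le> min (f t / t powr \<gamma>) (g t / t powr \<gamma>)"
    using assms st unfolding Inc_def by (intro min.mono) auto
  then show "min (f s) (g s) / s powr \<gamma> \<le> min (f t) (g t) / t powr \<gamma>"
    by (simp add: min_divide_distrib_right)
qed

lemma Dec_min:
  assumes "Dec \<gamma> f" "Dec \<gamma> g"
  shows "Dec \<gamma> (\<lambda>t. min (f t) (g t))"
  unfolding Dec_def
proof (intro allI impI)
  fix s t :: real assume st: "0 < s" "s \<le> t"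
  have "min (f t / t powr \<gamma>) (g t / t powr \<gamma>) \<le> min (f s / s powr \<gamma>) (g s / s powr \<gamma>)"
    using assms st unfolding Dec_def by (intro min.mono) auto
  then show "min (f t) (g t) / t powr \<gamma> \<le> min (f s) (g s) / s powr \<gamma>"
    by (simp add: min_divide_distrib_right)
qed

lemma Inc_powr:
  assumes "\<gamma> \<le> \<beta>" "0 \<le> c"
  shows "Inc \<gamma> (\<lambda>t. c * t powr \<beta>)"
  unfolding Inc_def
proof (intro allI impI)
  fix s t :: real assume st: "0 < s" "s \<le> t"
  have "c * s powr (\<beta> - \<gamma>) \<le> c * t powr (\<beta> - \<gamma>)"
    using assms st by (intro mult_left_mono powr_mono2) auto
  then show "c * s powr \<beta> / s powr \<gamma> \<le> c * t powr \<beta> / t powr \<gamma>"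
    by (simp add: powr_diff)
qed

lemma Dec_powr:
  assumes "\<beta> \<le> \<gamma>" "0 \<le> c"
  shows "Dec \<gamma> (\<lambda>t. c * t powr \<beta>)"
  unfolding Dec_def
proof (intro allI impI)
  fix s t :: real assume st: "0 < s" "s \<le> t"
  have "c * t powr (\<beta> - \<gamma>) \<le> c * s powr (\<beta> - \<gamma>)"
    using assms st by (intro mult_left_mono powr_mono2') auto
  then show "c * t powr \<beta> / t powr \<gamma> \<le> c * s powr \<beta> / s powr \<gamma>"
    by (simp add: powr_diff)
qed

lemma Inc_le_exponent:
  assumes "Inc \<gamma> g" "\<delta> \<le> \<gamma>" "\<And>t. 0 < t \<Longrightarrow> 0 \<le> g t"
  shows "Inc \<delta> g"
  unfolding Inc_def
proof (intro allI impI)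
  fix s t :: real assume st: "0 < s" "s \<le> t"
  have "g s / s powr \<delta> = g s / s powr \<gamma> * s powr (\<gamma> - \<delta>)"
    using st by (simp add: powr_diff)
  also have "\<dots> \<le> g t / t powr \<gamma> * t powr (\<gamma> - \<delta>)"
  proof (rule mult_mono)
    show "g s / s powr \<gamma> \<le> g t / t powr \<gamma>"
      using assms(1) st unfolding Inc_def by blast
    show "s powr (\<gamma> - \<delta>) \<le> t powr (\<gamma> - \<delta>)"
      using assms(2) st by (intro powr_mono2) auto
    show "0 \<le> g t / t powr \<gamma>"
      using assms(3) st by simp
  qed simp
  also have "\<dots> = g t / t powr \<delta>"
    using st by (simp add: powr_diff)
  finally show "g s / s powr \<delta> \<le> g t / t powr \<delta>" .
qed

lemma Inc_1_divide_le:
  assumes "Inc 1 g" "g 0 = 0" "0 \<le> u" "1 \<le> l"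
  shows "g (u / l) \<le> g u / l"
proof (cases "u = 0")
  case False
  then have "0 < u / l" "u / l \<le> u"
    using assms by (auto simp: divide_le_eq)
  then have "g (u / l) / (u / l) \<le> g u / u"
    using assms(1) unfolding Inc_def by fastforce
  then show ?thesis
    using assms False by (simp add: divide_le_eq le_divide_eq field_simps)
qed (use assms in simp)

section \<open>Integrals of functions with (Inc) and (Dec)\<close>

text \<open>(Inc) and (Dec) only constrain a function on \<open>(0,\<infinity>)\<close>; in particular \<open>\<phi>' x 0\<close> is
  arbitrary.  Integrals over \<open>[0,t]\<close> are therefore handled through the extension by zero,
  which is monotone and continuous on all of \<open>\<real>\<close>.\<close>

definition zero_ext :: "(real \<Rightarrow> real) \<Rightarrow> real \<Rightarrow> real" where
  "zero_ext g s = (if 0 < s then g s else 0)"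

lemma integral_zero_ext: "integral {0..t} (zero_ext g) = integral {0..t} g"
  by (rule integral_spike[of "{0}"]) (auto simp: zero_ext_def)

lemma has_real_derivative_integral_zero_ext:
  assumes cont: "continuous_on UNIV (zero_ext g)"
  shows "((\<lambda>u. integral {0..u} g) has_real_derivative zero_ext g t) (at t)"
proof -
  define a b where "a = min 0 (t - 1)" and "b = t + 1"
  have ab: "a \<le> 0" "a < t" "t < b"
    by (auto simp: a_def b_def)
  have int: "zero_ext g integrable_on {c..d}" for c d
    by (rule integrable_continuous_real[OF continuous_on_subset[OF cont]]) auto
  have eq: "(\<lambda>u. integral {0..u} g) = (\<lambda>u. integral {a..u} (zero_ext g))"
  proof (rule ext)
    fix u
    show "integral {0..u} g = integral {a..u} (zero_ext g)"
    proof (cases "0 \<le> u")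
      case True
      have "integral {a..0} (zero_ext g) = integral {a..0} (\<lambda>_. 0)"
        by (rule integral_cong) (simp add: zero_ext_def)
      moreover have "integral {a..0} (zero_ext g) + integral {0..u} (zero_ext g)
          = integral {a..u} (zero_ext g)"
        using True int ab by (intro Henstock_Kurzweil_Integration.integral_combine) auto
      ultimately show ?thesis
        by (simp add: integral_zero_ext)
    next
      case False
      have "integral {a..u} (zero_ext g) = integral {a..u} (\<lambda>_. 0)"
        using False by (intro integral_cong) (simp add: zero_ext_def)
      then show ?thesis
        using False by simp
    qed
  qed
  have "((\<lambda>u. integral {a..u} (zero_ext g)) has_real_derivative zero_ext g t) (at t within {a..b})"
    using ab by (intro integral_has_real_derivative[OF continuous_on_subset[OF cont]]) auto
  moreover have "at t within {a..b} = at t"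
    using ab by (intro at_within_interior) auto
  ultimately show ?thesis
    unfolding eq by (simp only:)
qed

locale inc_dec =
  fixes g :: "real \<Rightarrow> real" and p q :: real
  assumes nonneg: "\<And>t. 0 < t \<Longrightarrow> 0 \<le> g t"
    and Inc: "Inc (p - 1) g" and Dec: "Dec (q - 1) g"
    and exponents: "1 < p" "p \<le> q"
begin

lemma mono_pos:
  assumes "0 < s" "s \<le> t"
  shows "g s \<le> g t"
proof -
  have Inc0: "Inc 0 g"
    using Inc_le_exponent[OF Inc _ nonneg] exponents by simp
  show ?thesis
    using Inc_bounds(1)[OF Inc0 assms] assms by simp
qed

lemma mono_zero_ext: "mono (zero_ext g)"
  unfolding mono_def zero_ext_def using mono_pos nonneg by force

lemma integrable_zero_ext: "zero_ext g integrable_on {a..b}"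
  by (rule integrable_on_mono_on, rule mono_imp_mono_on, rule mono_zero_ext)

lemma nonneg_integral: "0 \<le> integral {0..t} g"
proof -
  have "0 \<le> integral {0..t} (zero_ext g)"
    by (rule Henstock_Kurzweil_Integration.integral_nonneg[OF integrable_zero_ext])
       (simp add: zero_ext_def nonneg)
  then show ?thesis
    by (simp only: integral_zero_ext)
qed

lemma integral_le_Inc: "0 < t \<Longrightarrow> integral {0..t} g \<le> t * g t / p"
proof -
  assume t: "0 < t"
  have pw: "((\<lambda>s. g t / t powr (p - 1) * s powr (p - 1)) has_integral
      (g t / t powr (p - 1) * (t powr (p - 1 + 1) / (p - 1 + 1)))) {0..t}"
    using t exponents by (intro has_integral_mult_right has_integral_powr_from_0) auto
  have "integral {0..t} g \<le> g t / t powr (p - 1) * (t powr (p - 1 + 1) / (p - 1 + 1))"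
    unfolding integral_zero_ext[of t g, symmetric]
  proof (rule has_integral_le[OF integrable_integral[OF integrable_zero_ext] pw])
    show "zero_ext g s \<le> g t / t powr (p - 1) * s powr (p - 1)" if "s \<in> {0..t}" for s
      using that Inc_bounds(1)[OF Inc, of s t] by (auto simp: zero_ext_def)
  qed
  also have "\<dots> = t * g t / p"
    using t by (simp add: powr_diff field_simps)
  finally show ?thesis .
qed

lemma integral_ge_Dec: "0 < t \<Longrightarrow> t * g t / q \<le> integral {0..t} g"
proof -
  assume t: "0 < t"
  have pw: "((\<lambda>s. g t / t powr (q - 1) * s powr (q - 1)) has_integral
      (g t / t powr (q - 1) * (t powr (q - 1 + 1) / (q - 1 + 1)))) {0..t}"
    using t exponents by (intro has_integral_mult_right has_integral_powr_from_0) auto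
  have "t * g t / q = g t / t powr (q - 1) * (t powr (q - 1 + 1) / (q - 1 + 1))"
    using t exponents by (simp add: powr_diff field_simps)
  also have "\<dots> \<le> integral {0..t} g"
    unfolding integral_zero_ext[of t g, symmetric]
  proof (rule has_integral_le[OF pw integrable_integral[OF integrable_zero_ext]])
    show "g t / t powr (q - 1) * s powr (q - 1) \<le> zero_ext g s" if "s \<in> {0..t}" for s
      using that Dec_bounds(1)[OF Dec, of s t] by (auto simp: zero_ext_def)
  qed
  finally show ?thesis .
qed

lemma integral_le_at_1: "0 \<le> t \<Longrightarrow> t \<le> 1 \<Longrightarrow> integral {0..t} g \<le> g 1"
proof (cases "t = 0")
  case False
  assume t: "0 \<le> t" "t \<le> 1"
  then have "integral {0..t} g \<le> t * g t / p"
    using False by (intro integral_le_Inc) auto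
  also have "\<dots> \<le> 1 * g 1 / 1"
  proof (rule frac_le)
    show "t * g t \<le> 1 * g 1"
      using t False nonneg mono_pos[of t 1] by (intro mult_mono) auto
  qed (use t False exponents nonneg in auto)
  finally show ?thesis by simp
qed (simp add: nonneg)

lemma integral_le_powr: "1 \<le> t \<Longrightarrow> integral {0..t} g \<le> g 1 * t powr q"
proof -
  assume t: "1 \<le> t"
  have "integral {0..t} g \<le> t * g t / p"
    using t by (intro integral_le_Inc) auto
  also have "\<dots> \<le> t * (g 1 / 1 powr (q - 1) * t powr (q - 1)) / 1"
  proof (rule frac_le)
    show "t * g t \<le> t * (g 1 / 1 powr (q - 1) * t powr (q - 1))"
      using t Dec_bounds(2)[OF Dec, of 1 t] by (intro mult_left_mono) auto
  qed (use t exponents nonneg in auto)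
  also have "\<dots> = g 1 * t powr q"
    using t by (simp add: powr_diff field_simps)
  finally show ?thesis .
qed

lemma tendsto_zero_ext_0: "(zero_ext g \<longlongrightarrow> 0) (at 0)"
proof -
  have "eventually (\<lambda>s. s < 1) (at (0::real))"
    using order_tendstoD(2)[OF tendsto_ident_at[of "0::real" UNIV], of 1] by simp
  then have upper: "eventually (\<lambda>s. zero_ext g s \<le> g 1 * \<bar>s\<bar> powr (p - 1)) (at 0)"
  proof eventually_elim
    case (elim s)
    then show ?case
      using Inc_bounds(1)[OF Inc, of s 1] nonneg[of 1] by (auto simp: zero_ext_def)
  qed
  have lower: "eventually (\<lambda>s. 0 \<le> zero_ext g s) (at 0)"
    by (simp add: zero_ext_def nonneg)
  have "((\<lambda>s. \<bar>s\<bar> powr (p - 1)) \<longlongrightarrow> 0) (at (0::real))"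
    by (rule tendsto_zero_powrI[OF tendsto_rabs_zero[OF tendsto_ident_at] tendsto_const])
      (use exponents in auto)
  then have "((\<lambda>s. g 1 * \<bar>s\<bar> powr (p - 1)) \<longlongrightarrow> 0) (at 0)"
    using tendsto_mult[OF tendsto_const, of _ 0 _ "g 1"] by simp
  then show ?thesis
    by (rule tendsto_sandwich[OF lower upper tendsto_const])
qed

lemma tendsto_zero_ext_pos:
  assumes s0: "0 < s0"
  shows "(zero_ext g \<longlongrightarrow> g s0) (at s0)"
proof -
  have lim: "((\<lambda>s. g s0 / s0 powr \<gamma> * s powr \<gamma>) \<longlongrightarrow> g s0) (at s0)" for \<gamma>
  proof -
    have "((\<lambda>s. g s0 / s0 powr \<gamma> * s powr \<gamma>) \<longlongrightarrow> g s0 / s0 powr \<gamma> * s0 powr \<gamma>) (at s0)"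
      using s0 by (intro tendsto_intros) auto
    then show ?thesis
      using s0 by simp
  qed
  define lo hi where
    "lo s = min (g s0 / s0 powr (p - 1) * s powr (p - 1)) (g s0 / s0 powr (q - 1) * s powr (q - 1))"
    and
    "hi s = max (g s0 / s0 powr (p - 1) * s powr (p - 1)) (g s0 / s0 powr (q - 1) * s powr (q - 1))"
    for s
  have "eventually (\<lambda>s. 0 < s) (at s0)"
    using order_tendstoD(1)[OF tendsto_ident_at s0] .
  then have bounds: "eventually (\<lambda>s. lo s \<le> zero_ext g s \<and> zero_ext g s \<le> hi s) (at s0)"
  proof eventually_elim
    case (elim s)
    show ?case
    proof (cases "s \<le> s0")
      case True
      have "g s \<le> g s0 / s0 powr (p - 1) * s powr (p - 1)"
        using Inc_bounds(1)[OF Inc elim True] .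
      moreover have "g s0 / s0 powr (q - 1) * s powr (q - 1) \<le> g s"
        using Dec_bounds(1)[OF Dec elim True] .
      ultimately show ?thesis
        using elim by (auto simp: lo_def hi_def zero_ext_def)
    next
      case False
      have "g s0 / s0 powr (p - 1) * s powr (p - 1) \<le> g s"
        using Inc_bounds(2)[OF Inc s0] False by simp
      moreover have "g s \<le> g s0 / s0 powr (q - 1) * s powr (q - 1)"
        using Dec_bounds(2)[OF Dec s0] False by simp
      ultimately show ?thesis
        using elim by (auto simp: lo_def hi_def zero_ext_def)
    qed
  qed
  have "(lo \<longlongrightarrow> g s0) (at s0)"
    using tendsto_min[OF lim lim] unfolding lo_def by simp
  moreover have "(hi \<longlongrightarrow> g s0) (at s0)"
    using tendsto_max[OF lim lim] unfolding hi_def by simp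
  ultimately show ?thesis
    using eventually_mono[OF bounds] by (metis (mono_tags, lifting) tendsto_sandwich)
qed

lemma continuous_zero_ext: "continuous_on UNIV (zero_ext g)"
proof -
  have "(zero_ext g \<longlongrightarrow> zero_ext g s0) (at s0)" for s0
  proof (cases s0 "0::real" rule: linorder_cases)
    case less
    have "eventually (\<lambda>s. zero_ext g s = 0) (at s0)"
      using order_tendstoD(2)[OF tendsto_ident_at less] by eventually_elim (simp add: zero_ext_def)
    then show ?thesis
      using less by (simp add: tendsto_eventually zero_ext_def)
  next
    case equal
    then show ?thesis
      using tendsto_zero_ext_0 by (simp add: zero_ext_def)
  next
    case greater
    then show ?thesis
      using tendsto_zero_ext_pos by (simp add: zero_ext_def)
  qed
  then show ?thesis
    by (intro continuous_at_imp_continuous_on ballI) (simp add: isCont_def)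
qed

lemma has_real_derivative_integral:
  "((\<lambda>u. integral {0..u} g) has_real_derivative zero_ext g t) (at t)"
  by (rule has_real_derivative_integral_zero_ext[OF continuous_zero_ext])

lemma borel_measurable_integral: "(\<lambda>t. integral {0..t} g) \<in> borel_measurable borel"
  by (intro borel_measurable_continuous_onI continuous_at_imp_continuous_on ballI)
    (rule DERIV_isCont[OF has_real_derivative_integral])

lemma Inc_integral: "Inc p (\<lambda>t. integral {0..t} g)"
  unfolding Inc_def
proof (intro allI impI)
  fix s t :: real assume st: "0 < s" "s \<le> t"
  define G where "G u = integral {0..u} g" for u
  have deriv: "((\<lambda>u. G u / u powr p) has_real_derivative
      (g u * u powr p - G u * (p * u powr (p - 1))) / (u powr p * u powr p)) (at u)"
    if u: "0 < u" for u
  proof (rule DERIV_divide)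
    show "(G has_real_derivative g u) (at u)"
      using has_real_derivative_integral[of u] u unfolding G_def by (simp add: zero_ext_def)
    show "((\<lambda>u. u powr p) has_real_derivative p * u powr (p - 1)) (at u)"
      by (rule has_real_derivative_powr[OF u])
  qed (use u in simp)
  have deriv_nonneg: "0 \<le> (g u * u powr p - G u * (p * u powr (p - 1))) / (u powr p * u powr p)"
    if u: "0 < u" for u
  proof -
    have "p * G u \<le> u * g u"
      using integral_le_Inc[OF u] exponents unfolding G_def by (simp add: field_simps)
    then have "G u * (p * u powr (p - 1)) \<le> g u * (u * u powr (p - 1))"
      using u by (simp add: mult_right_mono mult.assoc mult.left_commute)
    also have "u * u powr (p - 1) = u powr p"
      using u by (simp add: powr_diff)
    finally show ?thesis
      by simp
  qed
  have "G s / s powr p \<le> G t / t powr p"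
  proof (rule DERIV_nonneg_imp_increasing_open[OF st(2)])
    show "\<exists>y. ((\<lambda>u. G u / u powr p) has_real_derivative y) (at x) \<and> 0 \<le> y"
      if "s < x" "x < t" for x
      using deriv deriv_nonneg st that by (meson less_trans)
    show "continuous_on {s..t} (\<lambda>u. G u / u powr p)"
    proof (intro continuous_at_imp_continuous_on ballI)
      fix x assume "x \<in> {s..t}"
      then have "0 < x"
        using st by auto
      then show "isCont (\<lambda>u. G u / u powr p) x"
        by (rule DERIV_isCont[OF deriv])
    qed
  qed
  then show "integral {0..s} g / s powr p \<le> integral {0..t} g / t powr p"
    unfolding G_def .
qed

lemma Inc_1_integral: "Inc 1 (\<lambda>t. integral {0..t} g)"
  by (rule Inc_le_exponent[OF Inc_integral]) (use nonneg_integral exponents in auto)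

end

section \<open>The power-law continuation beyond a threshold\<close>

text \<open>With \<open>T = tK\<close> this is the function \<open>\<phi>bar'\<close> of the proposition.\<close>

definition powr_truncation :: "real \<Rightarrow> real \<Rightarrow> (real \<Rightarrow> real) \<Rightarrow> real \<Rightarrow> real" where
  "powr_truncation p T g t = (if t \<le> T then g t else g T / T powr (p - 1) * t powr (p - 1))"

lemma powr_truncation_eq_min:
  assumes "Inc (p - 1) g" "0 < T" "0 < t"
  shows "powr_truncation p T g t = min (g t) (g T / T powr (p - 1) * t powr (p - 1))"
  using assms Inc_bounds[OF assms(1), of t T] Inc_bounds[OF assms(1), of T t]
  by (auto simp: powr_truncation_def min_def)

lemma inc_dec_powr_truncation:
  assumes "inc_dec g p q" "0 < T"
  shows "inc_dec (powr_truncation p T g) p q"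
proof -
  interpret inc_dec g p q by fact
  let ?c = "g T / T powr (p - 1)"
  have c: "0 \<le> ?c"
    using nonneg assms(2) by simp
  have eq: "powr_truncation p T g t = min (g t) (?c * t powr (p - 1))" if "0 < t" for t
    using powr_truncation_eq_min[OF Inc assms(2) that] .
  show ?thesis
  proof
    show "0 \<le> powr_truncation p T g t" if "0 < t" for t
      unfolding eq[OF that] using nonneg[OF that] c by (intro min.boundedI mult_nonneg_nonneg) auto
    show "Inc (p - 1) (powr_truncation p T g)"
      using Inc_cong[OF eq] Inc_min[OF Inc Inc_powr[OF order_refl c]] by simp
    show "Dec (q - 1) (powr_truncation p T g)"
      using exponents Dec_cong[OF eq] Dec_min[OF Dec Dec_powr[OF _ c]] by simp
  qed (use exponents in auto)
qed

lemma integral_powr_truncation_eq: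
  "t \<le> T \<Longrightarrow> integral {0..t} (powr_truncation p T g) = integral {0..t} g"
  by (rule integral_cong) (simp add: powr_truncation_def)

lemma integral_powr_truncation_le:
  assumes g: "inc_dec g p q" and h: "inc_dec h p q" and T: "1 \<le> T" and LK: "0 \<le> LK"
    and comparison: "\<And>s. 1 \<le> s \<Longrightarrow> s \<le> T \<Longrightarrow> integral {0..s} g \<le> LK * integral {0..s} h"
    and t: "1 \<le> t"
  shows "integral {0..t} (powr_truncation p T g) \<le> q / p * LK * integral {0..t} h"
proof -
  interpret g: inc_dec g p q by fact
  interpret h: inc_dec h p q by fact
  have qp: "1 \<le> q / p"
    using g.exponents by simp
  show ?thesis
  proof (cases "t \<le> T")
    case True
    have "integral {0..t} (powr_truncation p T g) \<le> LK * integral {0..t} h"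
      using comparison[OF t True] integral_powr_truncation_eq[OF True] by simp
    also have "\<dots> \<le> q / p * LK * integral {0..t} h"
      using qp LK h.nonneg_integral mult_right_mono[OF qp LK] by (intro mult_right_mono) auto
    finally show ?thesis .
  next
    case False
    interpret b: inc_dec "powr_truncation p T g" p q
      using inc_dec_powr_truncation[OF g] T by simp
    have "integral {0..t} (powr_truncation p T g) \<le> t * powr_truncation p T g t / p"
      using t by (intro b.integral_le_Inc) auto
    also have "\<dots> = T * g T / T powr p * t powr p / p"
      using False T t by (simp add: powr_truncation_def powr_diff field_simps)
    also have "\<dots> \<le> q * (LK * integral {0..T} h) / T powr p * t powr p / p"
    proof -
      have "T * g T \<le> q * integral {0..T} g"
        using g.integral_ge_Dec[of T] T g.exponents by (simp add: field_simps)
      also have "\<dots> \<le> q * (LK * integral {0..T} h)"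
        using comparison[OF T order_refl] g.exponents by simp
      finally show ?thesis
        using g.exponents by (intro divide_right_mono mult_right_mono) auto
    qed
    also have "\<dots> = q / p * LK * (integral {0..T} h / T powr p * t powr p)"
      by (simp add: mult_ac)
    also have "\<dots> \<le> q / p * LK * integral {0..t} h"
      using Inc_bounds(2)[OF h.Inc_integral, of T t] False T g.exponents LK
      by (intro mult_left_mono) auto
    finally show ?thesis .
  qed
qed

lemma integral_powr_truncation_le_add:
  assumes g: "inc_dec g p q" and h: "inc_dec h p q" and T: "1 \<le> T" and LK: "0 \<le> LK"
    and g1: "g 1 \<le> L"
    and comparison: "\<And>s. 1 \<le> s \<Longrightarrow> s \<le> T \<Longrightarrow> integral {0..s} g \<le> LK * integral {0..s} h"
    and t: "0 \<le> t"
  shows "integral {0..t} (powr_truncation p T g) \<le> q / p * LK * integral {0..t} h + L"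
proof -
  interpret g: inc_dec g p q by fact
  interpret h: inc_dec h p q by fact
  interpret b: inc_dec "powr_truncation p T g" p q
    using inc_dec_powr_truncation[OF g] T by simp
  have rhs: "0 \<le> q / p * LK * integral {0..t} h"
    using h.exponents LK h.nonneg_integral by simp
  show ?thesis
  proof (cases "t \<le> 1")
    case True
    have "integral {0..t} (powr_truncation p T g) \<le> powr_truncation p T g 1"
      by (rule b.integral_le_at_1[OF t True])
    also have "\<dots> \<le> L"
      using g1 T by (simp add: powr_truncation_def)
    finally show ?thesis
      using rhs by simp
  next
    case False
    then have "integral {0..t} (powr_truncation p T g) \<le> q / p * LK * integral {0..t} h"
      by (intro integral_powr_truncation_le[OF g h T LK comparison]) auto
    then show ?thesis
      using g1 g.nonneg[of 1] by simp
  qed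
qed

lemma le_of_phi_plus_le_phi_minus:
  assumes "x0 \<in> B" "x \<in> B" "0 \<le> LK"
    and "bdd_above ((\<lambda>y. \<Phi> y t) ` B)" "bdd_below ((\<lambda>y. \<Phi> y t) ` B)"
    and "phi_plus \<Phi> B t \<le> LK * phi_minus \<Phi> B t"
  shows "\<Phi> x0 t \<le> LK * \<Phi> x t"
proof -
  have "\<Phi> x0 t \<le> phi_plus \<Phi> B t"
    unfolding phi_plus_def using assms by (intro cSUP_upper) auto
  also have "\<dots> \<le> LK * phi_minus \<Phi> B t"
    by fact
  also have "\<dots> \<le> LK * \<Phi> x t"
    unfolding phi_minus_def using assms by (intro mult_left_mono cINF_lower) auto
  finally show ?thesis .
qed

lemma integral_le_of_phi_plus_le_phi_minus:
  fixes \<Phi> \<Phi>' :: "'a \<Rightarrow> real \<Rightarrow> real"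
  assumes family: "\<And>y. y \<in> B \<Longrightarrow> inc_dec (\<Phi>' y) p q" "\<And>y. y \<in> B \<Longrightarrow> \<Phi>' y 1 \<le> L"
    and \<Phi>: "\<And>y s. y \<in> B \<Longrightarrow> 0 \<le> s \<Longrightarrow> \<Phi> y s = integral {0..s} (\<Phi>' y)"
    and x: "x0 \<in> B" "x \<in> B" and LK: "0 \<le> LK" and t: "1 \<le> t"
    and plus_minus: "phi_plus \<Phi> B t \<le> LK * phi_minus \<Phi> B t"
  shows "integral {0..t} (\<Phi>' x0) \<le> LK * integral {0..t} (\<Phi>' x)"
proof -
  have bounds: "0 \<le> \<Phi> y t \<and> \<Phi> y t \<le> L * t powr q" if "y \<in> B" for y
  proof -
    interpret inc_dec "\<Phi>' y" p q
      by (rule family(1)[OF that])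
    have "integral {0..t} (\<Phi>' y) \<le> L * t powr q"
      using integral_le_powr[OF t] mult_right_mono[OF family(2)[OF that], of "t powr q"] by simp
    then show ?thesis
      using \<Phi>[OF that] t nonneg_integral[of t] by simp
  qed
  have "\<Phi> x0 t \<le> LK * \<Phi> x t"
  proof (rule le_of_phi_plus_le_phi_minus[OF x LK _ _ plus_minus])
    show "bdd_above ((\<lambda>y. \<Phi> y t) ` B)"
      using bounds by (intro bdd_aboveI2[where M = "L * t powr q"]) auto
    show "bdd_below ((\<lambda>y. \<Phi> y t) ` B)"
      using bounds by (intro bdd_belowI2[where m = 0]) auto
  qed
  then show ?thesis
    using \<Phi> x t by simp
qed

section \<open>Generalized Orlicz spaces\<close>

text \<open>The integrand need not be measurable: the modular in the definition of \<open>orlicz\<close>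
  integrates \<open>\<lambda>x. \<Phi> x (\<bar>f x\<bar> / c)\<close>, which is not known to be measurable.\<close>

lemma nn_integral_cmult_le:
  fixes c :: ennreal
  assumes "c < top"
  shows "(\<integral>\<^sup>+ x. c * f x \<partial>M) \<le> c * integral\<^sup>N M f"
proof (cases "c = 0")
  case False
  have cc: "inverse c * c = 1"
    using ennreal_divide_self[OF False assms] by (simp add: divide_ennreal_def mult.commute)
  show ?thesis
    unfolding nn_integral_def[of M "\<lambda>x. c * f x"]
  proof (rule SUP_least)
    fix u assume "u \<in> {u. simple_function M u \<and> u \<le> (\<lambda>x. c * f x)}"
    then have u: "simple_function M u" "\<And>x. u x \<le> c * f x"
      by (auto simp: le_fun_def)
    define v where "v x = inverse c * u x" for x
    have v: "simple_function M v"
      unfolding v_def using u(1) by auto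
    have "v x \<le> f x" for x
      using mult_left_mono[OF u(2)[of x], of "inverse c"] by (simp add: v_def mult.assoc[symmetric] cc)
    then have "integral\<^sup>S M v \<le> integral\<^sup>N M f"
      unfolding nn_integral_def using v by (intro SUP_upper) (auto simp: le_fun_def)
    moreover have "u = (\<lambda>x. c * v x)"
      by (simp add: v_def mult.assoc[symmetric] cc mult.commute[of c])
    then have "integral\<^sup>S M u = c * integral\<^sup>S M v"
      using v by simp
    ultimately show "integral\<^sup>S M u \<le> c * integral\<^sup>N M f"
      by (simp add: mult_left_mono)
  qed
qed simp

lemma nn_integral_le_affine:
  assumes G: "G \<in> borel_measurable M"
    and bound: "\<And>x. x \<in> space M \<Longrightarrow> G x \<le> A * F x + C" and AC: "0 \<le> A" "0 \<le> C"
  shows "(\<integral>\<^sup>+ x. ennreal (G x) \<partial>M)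
    \<le> ennreal C * emeasure M (space M) + ennreal A * (\<integral>\<^sup>+ x. ennreal (F x) \<partial>M)"
proof -
  have "(\<integral>\<^sup>+ x. ennreal (G x) \<partial>M) \<le> (\<integral>\<^sup>+ x. ennreal C + ennreal (G x - C) \<partial>M)"
  proof (rule nn_integral_mono)
    fix x
    show "ennreal (G x) \<le> ennreal C + ennreal (G x - C)"
    proof (cases "C \<le> G x")
      case True
      then show ?thesis
        using AC by (simp add: ennreal_plus[symmetric])
    next
      case False
      then have "ennreal (G x) \<le> ennreal C"
        by (intro ennreal_leI) simp
      then show ?thesis
        by (intro add_increasing2) auto
    qed
  qed
  also have "\<dots> = ennreal C * emeasure M (space M) + (\<integral>\<^sup>+ x. ennreal (G x - C) \<partial>M)"
    using G by (subst nn_integral_add) auto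
  also have "(\<integral>\<^sup>+ x. ennreal (G x - C) \<partial>M) \<le> (\<integral>\<^sup>+ x. ennreal A * ennreal (F x) \<partial>M)"
  proof (rule nn_integral_mono)
    fix x assume "x \<in> space M"
    then show "ennreal (G x - C) \<le> ennreal A * ennreal (F x)"
      using bound[of x] AC(1) by (simp add: ennreal_mult'[symmetric] ennreal_leI)
  qed
  also have "\<dots> \<le> ennreal A * (\<integral>\<^sup>+ x. ennreal (F x) \<partial>M)"
    by (rule nn_integral_cmult_le) simp
  finally show ?thesis
    by (simp add: add_left_mono)
qed

lemma orlicz_subset:
  fixes \<Phi> :: "'a::euclidean_space \<Rightarrow> real \<Rightarrow> real" and \<Psi> :: "real \<Rightarrow> real"
  assumes B: "B \<in> sets lebesgue" "emeasure lebesgue B \<le> 1"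
    and \<Psi>: "\<Psi> \<in> borel_measurable borel" "Inc 1 \<Psi>" "\<Psi> 0 = 0"
    and bound: "\<And>x t. x \<in> B \<Longrightarrow> 0 \<le> t \<Longrightarrow> \<Psi> t \<le> A * \<Phi> x t + C"
    and AC: "0 \<le> A" "0 \<le> C"
  shows "orlicz \<Phi> B \<subseteq> orlicz (\<lambda>_. \<Psi>) B"
proof
  fix f assume "f \<in> orlicz \<Phi> B"
  then obtain c where f: "f \<in> borel_measurable (lebesgue_on B)" and c: "0 < c"
    and \<Phi>f: "(\<integral>\<^sup>+ x. ennreal (\<Phi> x (\<bar>f x\<bar> / c)) \<partial>lebesgue_on B) \<le> 1"
    unfolding orlicz_def by auto
  define v where "v x = \<bar>f x\<bar> / c" for x
  have \<Psi>v: "(\<lambda>x. \<Psi> (v x)) \<in> borel_measurable (lebesgue_on B)"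
    unfolding v_def using f \<Psi>(1) by measurable
  have "(\<integral>\<^sup>+ x. ennreal (\<Psi> (v x)) \<partial>lebesgue_on B)
      \<le> ennreal C * emeasure lebesgue B
        + ennreal A * (\<integral>\<^sup>+ x. ennreal (\<Phi> x (v x)) \<partial>lebesgue_on B)"
    using nn_integral_le_affine[OF \<Psi>v, of A "\<lambda>x. \<Phi> x (v x)" C] B(1) bound c AC
    by (simp add: emeasure_restrict_space v_def)
  also have "\<dots> \<le> ennreal C * 1 + ennreal A * 1"
    using B(2) \<Phi>f by (intro add_mono mult_left_mono) (simp_all add: v_def)
  finally have \<Psi>v_bound: "(\<integral>\<^sup>+ x. ennreal (\<Psi> (v x)) \<partial>lebesgue_on B) \<le> ennreal (C + A)"
    using AC by (simp add: ennreal_plus)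
  define l where "l = max 1 (C + A)"
  have l: "1 \<le> l" "C + A \<le> l"
    unfolding l_def by auto
  have "(\<integral>\<^sup>+ x. ennreal (\<Psi> (\<bar>f x\<bar> / (c * l))) \<partial>lebesgue_on B)
      \<le> (\<integral>\<^sup>+ x. ennreal (1 / l) * ennreal (\<Psi> (v x)) \<partial>lebesgue_on B)"
  proof (rule nn_integral_mono)
    fix x
    have "0 \<le> v x"
      using c by (simp add: v_def)
    then have "\<Psi> (v x / l) \<le> \<Psi> (v x) / l"
      by (rule Inc_1_divide_le[OF \<Psi>(2,3) _ l(1)])
    moreover have "\<bar>f x\<bar> / (c * l) = v x / l"
      by (simp add: v_def)
    ultimately show "ennreal (\<Psi> (\<bar>f x\<bar> / (c * l))) \<le> ennreal (1 / l) * ennreal (\<Psi> (v x))"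
      using l by (simp add: ennreal_mult'[symmetric] ennreal_leI)
  qed
  also have "\<dots> = ennreal (1 / l) * (\<integral>\<^sup>+ x. ennreal (\<Psi> (v x)) \<partial>lebesgue_on B)"
    using \<Psi>v by (simp add: nn_integral_cmult)
  also have "\<dots> \<le> ennreal (1 / l) * ennreal (C + A)"
    by (intro mult_left_mono \<Psi>v_bound) simp
  also have "\<dots> = ennreal ((C + A) / l)"
    by (subst ennreal_mult'[symmetric]) (use l in simp_all)
  also have "\<dots> \<le> 1"
    using l by simp
  finally show "f \<in> orlicz (\<lambda>_. \<Psi>) B"
    unfolding orlicz_def using f c l by (intro CollectI conjI exI[of _ "c * l"]) auto
qed

lemma sobolev_orlicz_mono:
  "orlicz \<Phi> B \<subseteq> orlicz \<Psi> B \<Longrightarrow> sobolev_orlicz \<Phi> B \<subseteq> sobolev_orlicz \<Psi> B"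
  unfolding sobolev_orlicz_def by blast

theorem proposition5p1:
  fixes \<Omega> :: "'a::euclidean_space set"
    and x0 :: 'a and r \<gamma> K p q1 L LK :: real
    and \<phi>' \<phi> :: "'a \<Rightarrow> real \<Rightarrow> real"
    and tK :: real and \<phi>bar' \<phi>bar :: "real \<Rightarrow> real"
  assumes dom: "open \<Omega>" "connected \<Omega>" "bounded \<Omega>"
    and ball: "0 < r" "cball x0 r \<subseteq> \<Omega>" "measure lebesgue (ball x0 r) \<le> 1"
    and gam: "0 < \<gamma>" "\<gamma> < 1" and K: "K \<ge> 1"
    and tK_def: "tK = K * measure lebesgue (ball x0 r) powr ((\<gamma> - 1) / real DIM('a))"
    and pq: "1 < p" "p \<le> q1" and L: "L \<ge> 1"
    and nonneg: "\<And>x t. x \<in> \<Omega> \<Longrightarrow> 0 < t \<Longrightarrow> \<phi>' x t \<ge> 0"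
    and A0: "\<And>x. x \<in> \<Omega> \<Longrightarrow> A0 L (\<phi>' x)"
    and Inc: "\<And>x. x \<in> \<Omega> \<Longrightarrow> Inc (p - 1) (\<phi>' x)"
    and Dec: "\<And>x. x \<in> \<Omega> \<Longrightarrow> Dec (q1 - 1) (\<phi>' x)"
    and phi_def: "\<And>x t. x \<in> \<Omega> \<Longrightarrow> 0 \<le> t \<Longrightarrow> \<phi> x t = integral {0..t} (\<phi>' x)"
    and convex: "\<And>x. x \<in> \<Omega> \<Longrightarrow> convex_on {0..} (\<phi> x)"
    and phibar'_def: "\<And>t. \<phi>bar' t = (if t \<le> tK then \<phi>' x0 t
                                      else \<phi>' x0 tK / tK powr (p - 1) * t powr (p - 1))"
    and phibar_def: "\<And>t. \<phi>bar t = integral {0..t} \<phi>bar'"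
    and LK: "LK \<ge> 0"
    and comp: "\<And>t. 1 \<le> t \<Longrightarrow> t \<le> tK \<Longrightarrow>
                 phi_plus \<phi> (ball x0 r) t \<le> LK * phi_minus \<phi> (ball x0 r) t"
  shows "((\<exists>D. continuous_on {0..} D \<and>
            (\<forall>t\<ge>0. (\<phi>bar has_real_derivative D t) (at t within {0..}))) \<and>
          Inc (p - 1) \<phi>bar' \<and> Dec (q1 - 1) \<phi>bar')
       \<and> (\<forall>t. 0 \<le> t \<longrightarrow> t \<le> tK \<longrightarrow> \<phi>bar t = \<phi> x0 t)
       \<and> (\<forall>x\<in>ball x0 r. \<forall>t\<ge>0. \<phi>bar t \<le> q1 / p * LK * \<phi> x t + L)
       \<and> sobolev_orlicz \<phi> (ball x0 r) \<subseteq> sobolev_orlicz (\<lambda>x. \<phi>bar) (ball x0 r)"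
proof -
  have x0: "x0 \<in> \<Omega>" and B: "ball x0 r \<subseteq> \<Omega>"
    using ball by auto
  have \<phi>': "inc_dec (\<phi>' x) p q1" if "x \<in> \<Omega>" for x
    using nonneg[OF that] Inc[OF that] Dec[OF that] pq by unfold_locales auto
  have \<phi>'1: "\<phi>' x 1 \<le> L" if "x \<in> \<Omega>" for x
    using A0[OF that] unfolding A0_def by simp
  have tK: "1 \<le> tK"
    unfolding tK_def using K ball(3) content_ball_pos[OF ball(1), of x0] gam
    by (intro one_le_mult_powr) (auto simp: divide_nonpos_pos)
  have bar': "\<phi>bar' = powr_truncation p tK (\<phi>' x0)"
    by (rule ext) (simp add: phibar'_def powr_truncation_def)
  interpret bar: inc_dec \<phi>bar' p q1
    unfolding bar' using inc_dec_powr_truncation[OF \<phi>'[OF x0]] tK by simp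
  have bar: "\<phi>bar = (\<lambda>t. integral {0..t} \<phi>bar')"
    using phibar_def by (rule ext)
  have C1: "\<exists>D. continuous_on {0..} D \<and>
      (\<forall>t\<ge>0. (\<phi>bar has_real_derivative D t) (at t within {0..}))"
    using continuous_on_subset[OF bar.continuous_zero_ext] bar.has_real_derivative_integral
    unfolding bar by (intro exI[of _ "zero_ext \<phi>bar'"]) (auto intro: has_field_derivative_at_within)
  have agree: "\<phi>bar t = \<phi> x0 t" if "0 \<le> t" "t \<le> tK" for t
    using that phi_def[OF x0] integral_powr_truncation_eq[OF that(2)] unfolding bar bar' by simp
  have comparison: "integral {0..s} (\<phi>' x0) \<le> LK * integral {0..s} (\<phi>' x)"
    if "x \<in> ball x0 r" "1 \<le> s" "s \<le> tK" for x s
    by (rule integral_le_of_phi_plus_le_phi_minus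
        [where B = "ball x0 r" and \<Phi> = \<phi> and p = p and q = q1 and L = L])
      (use \<phi>' \<phi>'1 phi_def B ball(1) that LK comp[OF that(2,3)] in auto)
  have bound: "\<phi>bar t \<le> q1 / p * LK * \<phi> x t + L" if "x \<in> ball x0 r" "0 \<le> t" for x t
    using integral_powr_truncation_le_add[OF \<phi>'[OF x0] \<phi>'[of x] tK LK \<phi>'1[OF x0] comparison[OF that(1)]]
      phi_def[of x t] that B unfolding bar bar' by auto
  have "orlicz \<phi> (ball x0 r) \<subseteq> orlicz (\<lambda>x. \<phi>bar) (ball x0 r)"
  proof (rule orlicz_subset[where A = "q1 / p * LK" and C = L])
    show "emeasure lebesgue (ball x0 r) \<le> 1"
      using ball(3) by (simp add: emeasure_eq_measure2)
  qed (use bound L LK pq bar.borel_measurable_integral bar.Inc_1_integral in \<open>auto simp: bar\<close>)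
  then show ?thesis
    using C1 bar.Inc bar.Dec agree bound sobolev_orlicz_mono by blast
qed

end
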